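(* Let $L$ be a finite lattice, let $b\in L$, and let $A\subseteq L$ be a $b$-meet antichain. Let $L_A^b=\{\bigwedge A'\wedge b : A'\subseteq A\}$, regarded as a subposet of $L$ (it is a lattice), and let $\mu_A^b$ be the Möbius function of the lattice $L_A^b$. Then for every $\varphi\in R(L)$, $$\nabla_A^b\varphi=\sum_{x\in L_A^b}\varphi(x)\,\mu_A^b(x,b).$$
   Context: $L$ is a finite lattice with order $\le$, meet $\wedge$, minimum $\hat0$ and maximum $\hat1$; $R(L)$ is the space of real-valued functions on $L$. For $A'\subseteq L$, $\bigwedge A'$ is the meet of the elements of $A'$, with $\bigwedge\emptyset=\hat1$. For a finite subset $A\subseteq L$ and $b\in L$, the successive difference functional is $\nabla_A^b\varphi=\sum_{A'\subseteq A}(-1)^{|A'|}\varphi(\bigwedge A'\wedge b)$; for nonempty $A=\{a_1,\dots,a_n\}$ this equals $\nabla_{a_1,\ldots,a_n}\varphi(b)$, where $\nabla_a\varphi(x)=\varphi(x)-\varphi(x\wedge a)$ and $\nabla_{a_1,\ldots,a_n}\varphi=\nabla_{a_n}(\nabla_{a_1,\ldots,a_{n-1}}\varphi)$. An $n$-element subset $A=\{a_1,\dots,a_n\}$ of $L$ is a $b$-meet antichain if $\{a_1\wedge b,\dots,a_n\wedge b\}$ is an $n$-element antichain (pairwise incomparable distinct elements); a singleton $\{a\}$ counts as a $b$-meet antichain only when $b\not\le a$. The Möbius function $\mu$ of a finite poset $P$ is defined by $\mu(x,x)=1$ and $\mu(x,y)=-\sum_{x\le z<y}\mu(x,z)$ for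 $x<y$. *)

theory Defs
  imports Complex_Main
begin

text \<open>A finite lattice L is modelled by a type of class finite and complete_lattice
(every finite nonempty lattice is complete, with minimum bot and maximum top;
Inf of the empty set is top).\<close>

definition meet_set :: "'a::complete_lattice set \<Rightarrow> 'a \<Rightarrow> 'a" where
  "meet_set A' b = inf (Inf A') b"

definition nabla :: "'a::complete_lattice set \<Rightarrow> 'a \<Rightarrow> ('a \<Rightarrow> real) \<Rightarrow> real" where
  "nabla A b \<phi> = (\<Sum>A'\<in>Pow A. (-1) ^ card A' * \<phi> (meet_set A' b))"

definition b_meet_antichain :: "'a::lattice \<Rightarrow> 'a set \<Rightarrow> bool" where
  "b_meet_antichain b A \<longleftrightarrow> finite A \<and>
     inj_on (\<lambda>a. inf a b) A \<and>
     (\<forall>a\<in>A. \<forall>a'\<in>A. a \<noteq> a' \<longrightarrow> \<not> (inf a b \<le> inf a' b)) \<and>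
     (card A = 1 \<longrightarrow> (\<forall>a\<in>A. \<not> b \<le> a))"

definition LAb :: "'a::complete_lattice set \<Rightarrow> 'a \<Rightarrow> 'a set" where
  "LAb A b = {meet_set A' b | A'. A' \<subseteq> A}"

function mobius :: "'a::{order,finite} set \<Rightarrow> 'a \<Rightarrow> 'a \<Rightarrow> int" where
  "mobius P x y =
     (if x = y then 1
      else if x < y then - (\<Sum>z\<in>{z\<in>P. x \<le> z \<and> z < y}. mobius P x z)
      else 0)"
  by auto
termination
proof (relation "measure (\<lambda>(P, x, y). card {z\<in>P. x \<le> z \<and> z < y})")
  show "wf (measure (\<lambda>(P, x, y). card {z\<in>P. x \<le> z \<and> z < y}))" by simp
next
  fix P :: "'a set" and x y z :: 'a
  assume "z \<in> {z\<in>P. x \<le> z \<and> z < y}"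
  hence zP: "z \<in> P" "x \<le> z" "z < y" by auto
  have "{w\<in>P. x \<le> w \<and> w < z} \<subset> {w\<in>P. x \<le> w \<and> w < y}"
    using zP by auto
  hence "card {w\<in>P. x \<le> w \<and> w < z} < card {w\<in>P. x \<le> w \<and> w < y}"
    by (intro psubset_card_mono) auto
  thus "((P, x, z), P, x, y) \<in> measure (\<lambda>(P, x, y). card {z\<in>P. x \<le> z \<and> z < y})"
    by simp
qed

declare mobius.simps[simp del]

end

theory Submission
  imports Defs
begin

text \<open>Group the alternating sum defining nabla by the value x = meet_set A' b: this gives
nabla A b phi = sum over x of phi x * w x, where w x is the signed count of the A' with
meet_set A' b = x. Summing w over the elements of L_A^b above x gives the alternating sum over
all subsets of {a \<in> A. x \<le> a}, which is 1 if this set is empty and 0 otherwise; for a b-meet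
antichain it is empty exactly when x = b. So w is the function whose upward sums are the
indicator of b, and Moebius inversion on L_A^b identifies w x with mu(x, b).\<close>

lemma mobius_eq_0_if_not_le: "\<not> x \<le> y \<Longrightarrow> mobius P x y = 0"
  by (subst mobius.simps) auto

lemma sum_mobius_interval:
  fixes P :: "'a::{finite,order} set"
  assumes "x \<in> P" "y \<in> P"
  shows "(\<Sum>z\<in>{z\<in>P. x \<le> z \<and> z \<le> y}. mobius P x z) = (if x = y then 1 else 0)"
proof (cases "x < y")
  case True
  then have "{z\<in>P. x \<le> z \<and> z \<le> y} = insert y {z\<in>P. x \<le> z \<and> z < y}"
    using assms by auto
  then have "(\<Sum>z\<in>{z\<in>P. x \<le> z \<and> z \<le> y}. mobius P x z)
      = mobius P x y + (\<Sum>z\<in>{z\<in>P. x \<le> z \<and> z < y}. mobius P x z)"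
    by simp
  also have "\<dots> = 0"
    \<comment> \<open>mobius.simps is only used instantiated: unrestricted it rewrites its own recursive calls forever\<close>
    using True by (subst mobius.simps[of P x y]) simp
  finally show ?thesis
    using True by simp
next
  case False
  then have "{z\<in>P. x \<le> z \<and> z \<le> y} = (if x = y then {x} else {})"
    using assms by (auto simp: order.strict_iff_order intro: order.trans order.antisym)
  then show ?thesis by (simp add: mobius.simps[of P y y])
qed

lemma mobius_inversion_from_above:
  fixes P :: "'a::{finite,order} set" and f g :: "'a \<Rightarrow> 'b::comm_ring_1"
  assumes zeta: "\<And>z. z \<in> P \<Longrightarrow> (\<Sum>w\<in>{w\<in>P. z \<le> w}. f w) = g z"
    and "x \<in> P"
  shows "f x = (\<Sum>z\<in>P. of_int (mobius P x z) * g z)"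
proof -
  have "(\<Sum>z\<in>P. of_int (mobius P x z) * g z)
      = (\<Sum>z\<in>P. \<Sum>w\<in>P. if z \<le> w then of_int (mobius P x z) * f w else 0)"
    by (intro sum.cong refl)
      (simp add: zeta[symmetric] sum_distrib_left sum.inter_filter if_distrib cong: if_cong)
  also have "\<dots> = (\<Sum>w\<in>P. \<Sum>z\<in>P. if z \<le> w then of_int (mobius P x z) * f w else 0)"
    by (rule sum.swap)
  also have "\<dots> = (\<Sum>w\<in>P. f w * of_int (\<Sum>z\<in>{z\<in>P. x \<le> z \<and> z \<le> w}. mobius P x z))"
  proof (intro sum.cong refl)
    fix w
    have "(\<Sum>z\<in>P. if z \<le> w then of_int (mobius P x z) * f w else 0)
        = (\<Sum>z\<in>{z\<in>P. z \<le> w}. of_int (mobius P x z) * f w)"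
      by (simp add: sum.inter_filter)
    also have "\<dots> = (\<Sum>z\<in>{z\<in>P. x \<le> z \<and> z \<le> w}. of_int (mobius P x z) * f w)"
      by (rule sum.mono_neutral_right) (auto intro: ccontr simp: mobius_eq_0_if_not_le)
    finally show "(\<Sum>z\<in>P. if z \<le> w then of_int (mobius P x z) * f w else 0)
        = f w * of_int (\<Sum>z\<in>{z\<in>P. x \<le> z \<and> z \<le> w}. mobius P x z)"
      by (simp add: sum_distrib_left mult.commute)
  qed
  also have "\<dots> = f x"
    using \<open>x \<in> P\<close> by (simp add: sum_mobius_interval if_distrib cong: if_cong)
  finally show ?thesis ..
qed

lemma sum_Pow_alternating:
  assumes "finite S"
  shows "(\<Sum>T\<in>Pow S. (-1::'b::ring_1) ^ card T) = (if S = {} then 1 else 0)"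
proof (cases "S = {}")
  case False
  then have "card {T. T \<in> Pow S \<and> even (card T)} = card {T. T \<in> Pow S \<and> odd (card T)}"
    using card_subsupersets_even_odd[of S "{}"] assms by auto
  then show ?thesis
    using False assms by (simp add: sum_alternating_cancels)
qed simp

definition meet_weight :: "'a::complete_lattice set \<Rightarrow> 'a \<Rightarrow> 'a \<Rightarrow> real" where
  "meet_weight A b x = (\<Sum>A'\<in>{A'\<in>Pow A. meet_set A' b = x}. (-1) ^ card A')"

lemma sum_Pow_meet_set_eq_sum_LAb:
  assumes "finite A"
  shows "(\<Sum>A'\<in>Pow A. (-1) ^ card A' * g (meet_set A' b))
       = (\<Sum>x\<in>LAb A b. g x * meet_weight A b x)"
proof -
  have "LAb A b = (\<lambda>A'. meet_set A' b) ` Pow A"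
    unfolding LAb_def by auto
  moreover have "(\<Sum>A'\<in>Pow A. (-1) ^ card A' * g (meet_set A' b))
      = (\<Sum>x\<in>(\<lambda>A'. meet_set A' b) ` Pow A.
           \<Sum>A'\<in>{A'\<in>Pow A. meet_set A' b = x}. (-1) ^ card A' * g (meet_set A' b))"
    using assms by (intro sum.image_gen) simp
  ultimately show ?thesis
    unfolding meet_weight_def
    by (auto simp: sum_distrib_left mult.commute intro!: sum.cong)
qed

lemma nabla_eq_sum_meet_weight:
  "finite A \<Longrightarrow> nabla A b \<phi> = (\<Sum>x\<in>LAb A b. \<phi> x * meet_weight A b x)"
  unfolding nabla_def by (rule sum_Pow_meet_set_eq_sum_LAb)

lemma le_meet_set_iff: "x \<le> meet_set A' b \<longleftrightarrow> (\<forall>a\<in>A'. x \<le> a) \<and> x \<le> b"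
  by (simp add: meet_set_def le_Inf_iff)

lemma finite_LAb: "finite A \<Longrightarrow> finite (LAb A b)"
  unfolding LAb_def by simp

lemma top_in_LAb: "b \<in> LAb A b"
  unfolding LAb_def meet_set_def by (auto intro!: exI[of _ "{}"])

lemma LAb_le: "x \<in> LAb A b \<Longrightarrow> x \<le> b"
  unfolding LAb_def meet_set_def by auto

lemma sum_meet_weight_above:
  assumes "finite A" "x \<le> b"
  shows "(\<Sum>w\<in>{w\<in>LAb A b. x \<le> w}. meet_weight A b w) = (if \<forall>a\<in>A. \<not> x \<le> a then 1 else 0)"
proof -
  have "(\<Sum>w\<in>{w\<in>LAb A b. x \<le> w}. meet_weight A b w)
      = (\<Sum>w\<in>LAb A b. (if x \<le> w then 1 else 0) * meet_weight A b w)"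
    unfolding sum.inter_filter[OF finite_LAb[OF assms(1)]] by (intro sum.cong) auto
  also have "\<dots> = (\<Sum>A'\<in>Pow A. (-1) ^ card A' * (if x \<le> meet_set A' b then 1 else 0))"
    by (rule sum_Pow_meet_set_eq_sum_LAb[OF assms(1), symmetric])
  also have "\<dots> = (\<Sum>A'\<in>{A'\<in>Pow A. x \<le> meet_set A' b}. (-1) ^ card A')"
    using assms(1) by (subst sum.inter_filter) (auto intro: sum.cong)
  also have "{A'\<in>Pow A. x \<le> meet_set A' b} = Pow {a\<in>A. x \<le> a}"
    using assms(2) by (auto simp: le_meet_set_iff)
  finally show ?thesis
    using assms(1) by (simp add: sum_Pow_alternating)
qed

lemma b_meet_antichain_not_top_le:
  assumes "b_meet_antichain b A" "a \<in> A"
  shows "\<not> b \<le> a"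
proof
  assume "b \<le> a"
  have "a' = a" if "a' \<in> A" for a'
  proof (rule ccontr)
    assume "a' \<noteq> a"
    moreover have "inf a' b \<le> inf a b"
      using \<open>b \<le> a\<close> by (simp add: inf_absorb2)
    ultimately show False
      using assms that unfolding b_meet_antichain_def by blast
  qed
  then have "A = {a}"
    using assms(2) by blast
  then show False
    using assms \<open>b \<le> a\<close> unfolding b_meet_antichain_def by simp
qed

lemma LAb_no_upper_generator_iff:
  assumes "b_meet_antichain b A" "x \<in> LAb A b"
  shows "(\<forall>a\<in>A. \<not> x \<le> a) \<longleftrightarrow> x = b"
proof
  assume none: "\<forall>a\<in>A. \<not> x \<le> a"
  obtain A' where "A' \<subseteq> A" "x = meet_set A' b"
    using assms(2) unfolding LAb_def by auto
  moreover from this none have "A' = {}"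
    using le_meet_set_iff[of x A' b] by auto
  ultimately show "x = b"
    by (simp add: meet_set_def)
qed (use assms b_meet_antichain_not_top_le in blast)

lemma meet_weight_eq_mobius:
  fixes b :: "'a::{finite,complete_lattice}"
  assumes "b_meet_antichain b A" "x \<in> LAb A b"
  shows "meet_weight A b x = of_int (mobius (LAb A b) x b)"
proof -
  have "finite A"
    using assms(1) by (simp add: b_meet_antichain_def)
  then have "\<And>z. z \<in> LAb A b \<Longrightarrow>
      (\<Sum>w\<in>{w\<in>LAb A b. z \<le> w}. meet_weight A b w) = (if z = b then 1 else 0)"
    using assms(1) by (simp add: sum_meet_weight_above LAb_le LAb_no_upper_generator_iff)
  then have "meet_weight A b x
      = (\<Sum>z\<in>LAb A b. of_int (mobius (LAb A b) x z) * (if z = b then 1 else 0))"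
    using assms(2) by (rule mobius_inversion_from_above)
  also have "\<dots> = of_int (mobius (LAb A b) x b)"
    by (simp add: top_in_LAb if_distrib cong: if_cong)
  finally show ?thesis .
qed

theorem lemma2p2:
  fixes b :: "'a::{finite,complete_lattice}" and A :: "'a set" and \<phi> :: "'a \<Rightarrow> real"
  assumes "b_meet_antichain b A"
  shows "nabla A b \<phi> = (\<Sum>x\<in>LAb A b. \<phi> x * of_int (mobius (LAb A b) x b))"
proof -
  have "finite A"
    using assms by (simp add: b_meet_antichain_def)
  then show ?thesis
    using assms by (simp add: nabla_eq_sum_meet_weight meet_weight_eq_mobius)
qed

end
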